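(* Let $N=(V,E,c,K)$ be a network with killing and let $(X_n)_{n\geq0}$ be the random walk on $N$ started at some $x\in V$. Then for every $m,n\geq0$, \[ \mathbb{E}\left[\frac{p_m(X_n,X_0)}{p_n(X_n,X_0)}\right]\leq\mathbb{P}(X_m\neq\dagger)+\mathbb{P}(X_n=\dagger)\leq2, \] with the convention that the ratio equals $1$ when $X_n=\dagger$.
   Context: A network with killing is $N=(V,E,c,K)$ where $(V,E)$ is a graph, $c:E\to(0,\infty)$ are conductances and $K:V\to[0,\infty)$ is a killing function. With $c(u)$ the total conductance of oriented edges emanating from $u$ and $c(u,v)$ the total conductance of oriented edges from $u$ to $v$, the random walk on $N$ is the Markov chain on $V\cup\{\dagger\}$ with $P(u,v)=c(u,v)/(c(u)+K(u))$ and $P(u,\dagger)=K(u)/(c(u)+K(u))$ for $u,v\in V$, and $P(\dagger,\dagger)=1$. Write $p_n(u,v)=P^n(u,v)$. *)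

theory Defs
  imports "HOL-Analysis.Analysis"
begin

text \<open>The (multi)graph (V,E) is given by a
set of edges E and an endpoint map ep; each edge e with ep e = (a,b) yields the two
oriented edges a to b and b to a (a loop yields two oriented loops).
The cemetery state is None; a vertex v is the state Some v.\<close>

definition cond_uv :: "'e set \<Rightarrow> ('e \<Rightarrow> 'v \<times> 'v) \<Rightarrow> ('e \<Rightarrow> real) \<Rightarrow> 'v \<Rightarrow> 'v \<Rightarrow> real" where
  "cond_uv E ep c u v =
     (\<Sum>\<^sub>\<infinity>e\<in>{e\<in>E. ep e = (u, v)}. c e) + (\<Sum>\<^sub>\<infinity>e\<in>{e\<in>E. ep e = (v, u)}. c e)"

definition cond_tot :: "'e set \<Rightarrow> ('e \<Rightarrow> 'v \<times> 'v) \<Rightarrow> ('e \<Rightarrow> real) \<Rightarrow> 'v \<Rightarrow> real" where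
  "cond_tot E ep c u =
     (\<Sum>\<^sub>\<infinity>e\<in>{e\<in>E. fst (ep e) = u}. c e) + (\<Sum>\<^sub>\<infinity>e\<in>{e\<in>E. snd (ep e) = u}. c e)"

definition network_with_killing ::
  "'v set \<Rightarrow> 'e set \<Rightarrow> ('e \<Rightarrow> 'v \<times> 'v) \<Rightarrow> ('e \<Rightarrow> real) \<Rightarrow> ('v \<Rightarrow> real) \<Rightarrow> bool" where
  "network_with_killing V E ep c K \<longleftrightarrow>
     (\<forall>e\<in>E. fst (ep e) \<in> V \<and> snd (ep e) \<in> V \<and> c e > 0) \<and>
     (\<forall>u\<in>V. K u \<ge> 0) \<and>
     (\<forall>u\<in>V. c summable_on {e\<in>E. fst (ep e) = u \<or> snd (ep e) = u}) \<and>
     (\<forall>u\<in>V. cond_tot E ep c u + K u > 0)"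

definition rw_states :: "'v set \<Rightarrow> 'v option set" where
  "rw_states V = insert None (Some ` V)"

definition rw_P ::
  "'e set \<Rightarrow> ('e \<Rightarrow> 'v \<times> 'v) \<Rightarrow> ('e \<Rightarrow> real) \<Rightarrow> ('v \<Rightarrow> real) \<Rightarrow> 'v option \<Rightarrow> 'v option \<Rightarrow> real" where
  "rw_P E ep c K s t =
     (case s of
        None \<Rightarrow> (if t = None then 1 else 0)
      | Some u \<Rightarrow> (case t of
            None \<Rightarrow> K u / (cond_tot E ep c u + K u)
          | Some v \<Rightarrow> cond_uv E ep c u v / (cond_tot E ep c u + K u)))"

primrec rw_p ::
  "'v set \<Rightarrow> 'e set \<Rightarrow> ('e \<Rightarrow> 'v \<times> 'v) \<Rightarrow> ('e \<Rightarrow> real) \<Rightarrow> ('v \<Rightarrow> real) \<Rightarrow>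
   nat \<Rightarrow> 'v option \<Rightarrow> 'v option \<Rightarrow> real" where
  "rw_p V E ep c K 0 s t = (if s = t then 1 else 0)"
| "rw_p V E ep c K (Suc n) s t =
     (\<Sum>\<^sub>\<infinity>z\<in>rw_states V. rw_P E ep c K s z * rw_p V E ep c K n z t)"

end

theory Submission
  imports Defs
begin

(* The walk is reversible on V with respect to \<pi>(u) = c(u) + K(u), and the cemetery is never
   left, so detailed balance \<pi>(x) p_n(x,y) = \<pi>(y) p_n(y,x) passes from P to all its powers.
   Hence p_n(x,y) p_m(y,x) / p_n(y,x) = p_m(x,y) whenever p_n(y,x) > 0: the expectation over
   the event X_n \<in> V is at most P(X_m \<in> V), and the event X_n = cemetery contributes
   P(X_n = cemetery). Both probabilities are at most 1. *)

lemma has_sum_sum: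
  fixes f :: "'i \<Rightarrow> 'a \<Rightarrow> 'b::topological_comm_monoid_add"
  assumes "finite I" and "\<And>i. i \<in> I \<Longrightarrow> (f i has_sum s i) A"
  shows "((\<lambda>x. \<Sum>i\<in>I. f i x) has_sum (\<Sum>i\<in>I. s i)) A"
  using assms by (induction I rule: finite_induct) (simp_all add: has_sum_add)

type_synonym 'a kernel = "'a \<Rightarrow> 'a \<Rightarrow> real"

definition kernel_comp :: "'a set \<Rightarrow> 'a kernel \<Rightarrow> 'a kernel \<Rightarrow> 'a kernel" where
  "kernel_comp S Q R u v = (\<Sum>\<^sub>\<infinity>z\<in>S. Q u z * R z v)"

primrec kernel_pow :: "'a set \<Rightarrow> 'a kernel \<Rightarrow> nat \<Rightarrow> 'a kernel" where
  "kernel_pow S Q 0 = (\<lambda>u v. if u = v then 1 else 0)"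
| "kernel_pow S Q (Suc n) = kernel_comp S Q (kernel_pow S Q n)"

lemma kernel_comp_id_left:
  assumes "u \<in> S"
  shows "kernel_comp S (\<lambda>u v. if u = v then 1 else 0) R u v = R u v"
  unfolding kernel_comp_def
  by (rule infsumI, rule has_sum_finite_neutralI[of "{u}"]) (use assms in auto)

lemma kernel_comp_id_right:
  assumes "v \<in> S"
  shows "kernel_comp S Q (\<lambda>u v. if u = v then 1 else 0) u v = Q u v"
  unfolding kernel_comp_def
  by (rule infsumI, rule has_sum_finite_neutralI[of "{v}"]) (use assms in auto)

locale substochastic_kernel =
  fixes S :: "'a set" and Q :: "'a kernel"
  assumes nonneg: "u \<in> S \<Longrightarrow> v \<in> S \<Longrightarrow> 0 \<le> Q u v"
    and finite_sum_le_1: "u \<in> S \<Longrightarrow> finite F \<Longrightarrow> F \<subseteq> S \<Longrightarrow> sum (Q u) F \<le> 1"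
begin

lemma le_1: "u \<in> S \<Longrightarrow> v \<in> S \<Longrightarrow> Q u v \<le> 1"
  using finite_sum_le_1[of u "{v}"] by simp

lemma summable_on_row: "u \<in> S \<Longrightarrow> A \<subseteq> S \<Longrightarrow> Q u summable_on A"
  by (rule nonneg_bdd_above_summable_on)
     (use nonneg finite_sum_le_1 in \<open>auto intro!: bdd_aboveI[where M = 1]\<close>)

lemma infsum_row_le_1: "u \<in> S \<Longrightarrow> A \<subseteq> S \<Longrightarrow> infsum (Q u) A \<le> 1"
  by (rule infsum_le_finite_sums) (use summable_on_row finite_sum_le_1 in auto)

lemma summable_on_row_mult:
  assumes "u \<in> S" and "\<And>z. z \<in> S \<Longrightarrow> 0 \<le> g z \<and> g z \<le> 1"
  shows "(\<lambda>z. Q u z * g z) summable_on S"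
  by (rule summable_on_comparison_test[OF summable_on_row[OF assms(1) order_refl]])
     (use assms nonneg in \<open>auto intro: mult_left_le\<close>)

end

lemma substochastic_kernel_id: "substochastic_kernel S (\<lambda>u v. if u = v then 1 else 0)"
  by unfold_locales (auto simp: sum.delta)

lemma substochastic_kernel_comp:
  assumes Q: "substochastic_kernel S Q" and R: "substochastic_kernel S R"
  shows "substochastic_kernel S (kernel_comp S Q R)"
proof
  fix u v assume "u \<in> S" "v \<in> S"
  then show "0 \<le> kernel_comp S Q R u v"
    unfolding kernel_comp_def
    by (intro infsum_nonneg mult_nonneg_nonneg)
       (auto intro: substochastic_kernel.nonneg[OF Q] substochastic_kernel.nonneg[OF R])
next
  fix u F assume u: "u \<in> S" and F: "finite F" "F \<subseteq> S"
  have summands: "((\<lambda>z. Q u z * R z v) has_sum kernel_comp S Q R u v) S" if "v \<in> S" for v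
    unfolding kernel_comp_def
    by (rule has_sum_infsum, rule substochastic_kernel.summable_on_row_mult[OF Q u])
       (use that substochastic_kernel.nonneg[OF R] substochastic_kernel.le_1[OF R] in auto)
  have "((\<lambda>z. Q u z * sum (R z) F) has_sum sum (kernel_comp S Q R u) F) S"
    using has_sum_sum[OF F(1), of "\<lambda>v z. Q u z * R z v"] summands F(2)
    by (auto simp: sum_distrib_left)
  moreover have "(Q u has_sum infsum (Q u) S) S"
    using substochastic_kernel.summable_on_row[OF Q u order_refl] by simp
  ultimately have "sum (kernel_comp S Q R u) F \<le> infsum (Q u) S"
    by (rule has_sum_mono)
       (use substochastic_kernel.nonneg[OF Q u] substochastic_kernel.finite_sum_le_1[OF R _ F]
        in \<open>auto intro: mult_left_le\<close>)
  also have "\<dots> \<le> 1"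
    using substochastic_kernel.infsum_row_le_1[OF Q u order_refl] .
  finally show "sum (kernel_comp S Q R u) F \<le> 1" .
qed

lemma kernel_comp_assoc:
  assumes Q: "substochastic_kernel S Q" and R: "substochastic_kernel S R"
    and W: "substochastic_kernel S W" and u: "u \<in> S" and v: "v \<in> S"
  shows "kernel_comp S (kernel_comp S Q R) W u v = kernel_comp S Q (kernel_comp S R W) u v"
proof -
  interpret Q: substochastic_kernel S Q by (fact Q)
  interpret R: substochastic_kernel S R by (fact R)
  interpret W: substochastic_kernel S W by (fact W)
  interpret RW: substochastic_kernel S "kernel_comp S R W"
    using R W by (rule substochastic_kernel_comp)
  define f where "f z w = Q u z * R z w * W w v" for z w
  have inner: "((\<lambda>w. f z w) has_sum Q u z * kernel_comp S R W z v) S" if z: "z \<in> S" for z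
  proof -
    have "(\<lambda>w. R z w * W w v) summable_on S"
      by (rule R.summable_on_row_mult) (use z v W.nonneg W.le_1 in auto)
    then show ?thesis
      unfolding f_def kernel_comp_def mult.assoc by (intro has_sum_cmult_right) simp
  qed
  have outer: "(\<lambda>z. Q u z * kernel_comp S R W z v) summable_on S"
    by (rule Q.summable_on_row_mult) (use u v RW.nonneg RW.le_1 in auto)
  have "(\<lambda>(z, w). f z w) summable_on S \<times> S"
    by (rule summable_on_SigmaI[OF _ outer])
       (use inner u v Q.nonneg R.nonneg W.nonneg in \<open>auto simp: f_def\<close>)
  then have "(\<Sum>\<^sub>\<infinity>z\<in>S. \<Sum>\<^sub>\<infinity>w\<in>S. f z w) = (\<Sum>\<^sub>\<infinity>w\<in>S. \<Sum>\<^sub>\<infinity>z\<in>S. f z w)"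
    by (rule infsum_swap_banach)
  moreover have "(\<Sum>\<^sub>\<infinity>z\<in>S. \<Sum>\<^sub>\<infinity>w\<in>S. f z w) = kernel_comp S Q (kernel_comp S R W) u v"
    using inner by (auto simp: kernel_comp_def infsumI intro!: infsum_cong)
  moreover have "(\<Sum>\<^sub>\<infinity>w\<in>S. \<Sum>\<^sub>\<infinity>z\<in>S. f z w) = kernel_comp S (kernel_comp S Q R) W u v"
    by (simp add: f_def kernel_comp_def infsum_cmult_left')
  ultimately show ?thesis by simp
qed

lemma (in substochastic_kernel) kernel_pow_substochastic:
  "substochastic_kernel S (kernel_pow S Q n)"
  by (induction n)
     (auto intro: substochastic_kernel_comp substochastic_kernel_id substochastic_kernel_axioms)

lemma kernel_pow_Suc_right:
  assumes Q: "substochastic_kernel S Q" and "u \<in> S" and "v \<in> S"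
  shows "kernel_pow S Q (Suc n) u v = kernel_comp S (kernel_pow S Q n) Q u v"
  using assms(2,3)
proof (induction n arbitrary: u)
  case 0
  then show ?case by (simp add: kernel_comp_id_left kernel_comp_id_right)
next
  case (Suc n)
  have "kernel_pow S Q (Suc (Suc n)) u v = kernel_comp S Q (kernel_comp S (kernel_pow S Q n) Q) u v"
    unfolding kernel_pow.simps(2)[of S Q "Suc n"] kernel_comp_def[of S Q]
    by (rule infsum_cong) (simp add: Suc.IH Suc.prems(2) del: kernel_pow.simps)
  also have "\<dots> = kernel_comp S (kernel_pow S Q (Suc n)) Q u v"
    using kernel_comp_assoc[OF Q substochastic_kernel.kernel_pow_substochastic[OF Q] Q Suc.prems]
    by simp
  finally show ?case .
qed

(* T is the part of the state space on which detailed balance holds; states outside T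
   (the cemetery) cannot jump back into T. *)
locale reversible_kernel = substochastic_kernel +
  fixes T :: "'a set" and \<pi> :: "'a \<Rightarrow> real"
  assumes subset: "T \<subseteq> S"
    and weight_pos: "u \<in> T \<Longrightarrow> 0 < \<pi> u"
    and detailed_balance: "u \<in> T \<Longrightarrow> v \<in> T \<Longrightarrow> \<pi> u * Q u v = \<pi> v * Q v u"
    and no_entry: "z \<in> S - T \<Longrightarrow> u \<in> T \<Longrightarrow> Q z u = 0"
begin

abbreviation p :: "nat \<Rightarrow> 'a kernel" where
  "p n \<equiv> kernel_pow S Q n"

lemma kernel_pow_no_entry: "z \<in> S - T \<Longrightarrow> v \<in> T \<Longrightarrow> p n z v = 0"
proof (induction n arbitrary: z)
  case 0
  then show ?case by auto
next
  case (Suc n)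
  then have "Q z w * p n w v = 0" if "w \<in> S" for w
    using no_entry[of z w] that by (cases "w \<in> T") auto
  then show ?case by (simp add: kernel_comp_def infsum_0)
qed

lemma kernel_pow_detailed_balance:
  "u \<in> T \<Longrightarrow> v \<in> T \<Longrightarrow> \<pi> u * p n u v = \<pi> v * p n v u"
proof (induction n arbitrary: u v)
  case 0
  then show ?case by auto
next
  case (Suc n)
  have summand: "\<pi> u * (Q u z * p n z v) = \<pi> v * (p n v z * Q z u)" if z: "z \<in> S" for z
  proof (cases "z \<in> T")
    case True
    have "\<pi> u * (Q u z * p n z v) = Q z u * (\<pi> z * p n z v)"
      using detailed_balance[OF Suc.prems(1) True] by (simp add: algebra_simps)
    also have "\<dots> = \<pi> v * (p n v z * Q z u)"
      using Suc.IH[OF True Suc.prems(2)] by (simp add: algebra_simps)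
    finally show ?thesis .
  next
    case False
    then show ?thesis using kernel_pow_no_entry no_entry Suc.prems z by auto
  qed
  have "\<pi> u * p (Suc n) u v = (\<Sum>\<^sub>\<infinity>z\<in>S. \<pi> u * (Q u z * p n z v))"
    by (simp add: kernel_comp_def infsum_cmult_right')
  also have "\<dots> = (\<Sum>\<^sub>\<infinity>z\<in>S. \<pi> v * (p n v z * Q z u))"
    using summand by (rule infsum_cong)
  also have "\<dots> = \<pi> v * kernel_comp S (p n) Q v u"
    by (simp add: kernel_comp_def infsum_cmult_right')
  also have "\<dots> = \<pi> v * p (Suc n) v u"
    using kernel_pow_Suc_right[OF substochastic_kernel_axioms] Suc.prems subset by (metis subsetD)
  finally show ?case .
qed

lemma ratio_summand_eq:
  assumes x: "x \<in> T" and y: "y \<in> T" and "p n y x \<noteq> 0"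
  shows "p n x y * (p m y x / p n y x) = p m x y"
proof -
  have "\<pi> x * (p n x y * (p m y x / p n y x)) = \<pi> y * p m y x"
    using kernel_pow_detailed_balance[OF x y, of n] assms(3) by (simp add: field_simps)
  also have "\<dots> = \<pi> x * p m x y"
    using kernel_pow_detailed_balance[OF x y, of m] by simp
  finally show ?thesis
    using weight_pos[OF x] by (metis mult_left_cancel less_irrefl)
qed

(* If p n y x = 0 the summand is 0 by HOL's division by zero; detailed balance gives
   p n x y = 0 as well, so no convention for the ratio is needed there. *)
lemma ratio_summand_bounds:
  assumes "x \<in> T" and "y \<in> T"
  shows "0 \<le> p n x y * (p m y x / p n y x) \<and> p n x y * (p m y x / p n y x) \<le> p m x y"
proof -
  have "0 \<le> p k u v" if "u \<in> T" "v \<in> T" for k u v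
    using substochastic_kernel.nonneg[OF kernel_pow_substochastic] that subset by blast
  then show ?thesis
    using ratio_summand_eq[OF assms] assms by (cases "p n y x = 0") auto
qed

lemma expected_ratio_le:
  assumes x: "x \<in> T"
  shows "(\<lambda>y. p n x y * (p m y x / p n y x)) summable_on T
    \<and> (\<Sum>\<^sub>\<infinity>y\<in>T. p n x y * (p m y x / p n y x)) \<le> infsum (p m x) T"
proof -
  have summable: "p m x summable_on T"
    using substochastic_kernel.summable_on_row[OF kernel_pow_substochastic] x subset by blast
  have "(\<lambda>y. p n x y * (p m y x / p n y x)) summable_on T"
    by (rule summable_on_comparison_test[OF summable]) (use ratio_summand_bounds x in auto)
  then show ?thesis
    using infsum_mono[OF _ summable] ratio_summand_bounds x by auto
qed

end

lemma sum_infsum_disjoint_le: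
  fixes c :: "'a \<Rightarrow> real"
  assumes "finite G" and "c summable_on A" and "\<And>e. e \<in> A \<Longrightarrow> 0 \<le> c e"
    and "\<And>v. v \<in> G \<Longrightarrow> B v \<subseteq> A" and "disjoint_family_on B G"
  shows "(\<Sum>v\<in>G. infsum c (B v)) \<le> infsum c A"
proof -
  have "(\<Sum>v\<in>G. infsum c (B v)) = infsum c (\<Union>v\<in>G. B v)"
    by (rule sum_infsum)
       (use assms in \<open>auto simp: disjoint_family_on_def intro: summable_on_subset[OF assms(2)]\<close>)
  also have "\<dots> \<le> infsum c A"
    by (rule infsum_mono_neutral) (use assms in \<open>auto intro: summable_on_subset[OF assms(2)]\<close>)
  finally show ?thesis .
qed

lemma rw_p_eq_kernel_pow: "rw_p V E ep c K n = kernel_pow (rw_states V) (rw_P E ep c K) n"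
  by (induction n) (auto simp: kernel_comp_def intro!: ext)

(* The value at the cemetery is irrelevant: it lies outside the reversible part. *)
definition rw_weight ::
  "'e set \<Rightarrow> ('e \<Rightarrow> 'v \<times> 'v) \<Rightarrow> ('e \<Rightarrow> real) \<Rightarrow> ('v \<Rightarrow> real) \<Rightarrow> 'v option \<Rightarrow> real" where
  "rw_weight E ep c K s = (case s of None \<Rightarrow> 0 | Some u \<Rightarrow> cond_tot E ep c u + K u)"

context
  fixes V :: "'v set" and E :: "'e set" and ep :: "'e \<Rightarrow> 'v \<times> 'v"
    and c :: "'e \<Rightarrow> real" and K :: "'v \<Rightarrow> real"
  assumes network: "network_with_killing V E ep c K"
begin

lemma conductance_nonneg: "e \<in> E \<Longrightarrow> 0 \<le> c e"
  using network by (auto simp: network_with_killing_def less_imp_le)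

lemma cond_uv_nonneg: "0 \<le> cond_uv E ep c u v"
  unfolding cond_uv_def by (intro add_nonneg_nonneg infsum_nonneg) (auto intro: conductance_nonneg)

lemma sum_cond_uv_le_cond_tot:
  assumes u: "u \<in> V" and G: "finite G"
  shows "sum (cond_uv E ep c u) G \<le> cond_tot E ep c u"
proof -
  have summable: "c summable_on B" if "B \<subseteq> {e\<in>E. fst (ep e) = u \<or> snd (ep e) = u}" for B
    using network u that summable_on_subset by (fastforce simp: network_with_killing_def)
  have out: "(\<Sum>v\<in>G. infsum c {e\<in>E. ep e = (u, v)}) \<le> infsum c {e\<in>E. fst (ep e) = u}"
    by (rule sum_infsum_disjoint_le)
       (use G conductance_nonneg in \<open>auto simp: disjoint_family_on_def intro!: summable\<close>)
  have into: "(\<Sum>v\<in>G. infsum c {e\<in>E. ep e = (v, u)}) \<le> infsum c {e\<in>E. snd (ep e) = u}"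
    by (rule sum_infsum_disjoint_le)
       (use G conductance_nonneg in \<open>auto simp: disjoint_family_on_def intro!: summable\<close>)
  show ?thesis
    using out into unfolding cond_uv_def cond_tot_def by (simp add: sum.distrib)
qed

lemma rw_P_substochastic_kernel: "substochastic_kernel (rw_states V) (rw_P E ep c K)"
proof
  fix s t assume "s \<in> rw_states V" "t \<in> rw_states V"
  then show "0 \<le> rw_P E ep c K s t"
    using network cond_uv_nonneg
    by (auto simp: rw_states_def rw_P_def network_with_killing_def less_imp_le split: option.split)
next
  fix s and F :: "'v option set"
  assume s: "s \<in> rw_states V" and F: "finite F" "F \<subseteq> rw_states V"
  show "sum (rw_P E ep c K s) F \<le> 1"
  proof (cases s)
    case None
    then show ?thesis using F by (simp add: rw_P_def sum.delta')
  next
    case (Some u)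
    with s have u: "u \<in> V" by (auto simp: rw_states_def)
    let ?d = "cond_tot E ep c u + K u"
    have d_pos: "0 < ?d" and K_nonneg: "0 \<le> K u"
      using network u by (auto simp: network_with_killing_def)
    define G where "G = Some -` F"
    have G: "finite G"
      unfolding G_def using F(1) by (rule finite_vimageI) simp
    have "sum (rw_P E ep c K s) F \<le> sum (rw_P E ep c K s) (insert None (Some ` G))"
      by (rule sum_mono2)
         (use F G Some d_pos K_nonneg cond_uv_nonneg in \<open>auto simp: G_def rw_P_def split: option.split\<close>)
    also have "\<dots> = (K u + sum (cond_uv E ep c u) G) / ?d"
      using G by (simp add: Some rw_P_def sum.reindex add_divide_distrib sum_divide_distrib)
    also have "\<dots> \<le> 1"
      using sum_cond_uv_le_cond_tot[OF u G] d_pos by simp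
    finally show ?thesis .
  qed
qed

lemma rw_P_reversible_kernel:
  "reversible_kernel (rw_states V) (rw_P E ep c K) (Some ` V) (rw_weight E ep c K)"
proof intro_locales
  show "substochastic_kernel (rw_states V) (rw_P E ep c K)"
    by (fact rw_P_substochastic_kernel)
  have pos: "0 < cond_tot E ep c u + K u" if "u \<in> V" for u
    using network that by (auto simp: network_with_killing_def)
  show "reversible_kernel_axioms (rw_states V) (rw_P E ep c K) (Some ` V) (rw_weight E ep c K)"
    by unfold_locales
       (auto simp: rw_states_def rw_weight_def rw_P_def cond_uv_def pos less_imp_neq[OF pos, symmetric])
qed

end

theorem lemma3p3:
  fixes V :: "'v set" and E :: "'e set" and ep :: "'e \<Rightarrow> 'v \<times> 'v"
    and c :: "'e \<Rightarrow> real" and K :: "'v \<Rightarrow> real" and x :: 'v and m n :: nat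
  assumes "network_with_killing V E ep c K" and "x \<in> V"
  shows "(\<lambda>y. rw_p V E ep c K n (Some x) (Some y) *
              (rw_p V E ep c K m (Some y) (Some x) / rw_p V E ep c K n (Some y) (Some x)))
           summable_on V
    \<and> (\<Sum>\<^sub>\<infinity>y\<in>V. rw_p V E ep c K n (Some x) (Some y) *
              (rw_p V E ep c K m (Some y) (Some x) / rw_p V E ep c K n (Some y) (Some x)))
        + rw_p V E ep c K n (Some x) None * 1
      \<le> (\<Sum>\<^sub>\<infinity>y\<in>V. rw_p V E ep c K m (Some x) (Some y)) + rw_p V E ep c K n (Some x) None
    \<and> (\<Sum>\<^sub>\<infinity>y\<in>V. rw_p V E ep c K m (Some x) (Some y)) + rw_p V E ep c K n (Some x) None \<le> 2"
proof -
  let ?S = "rw_states V" and ?Q = "rw_P E ep c K"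
  interpret reversible_kernel ?S ?Q "Some ` V" "rw_weight E ep c K"
    using assms(1) by (rule rw_P_reversible_kernel)
  have x: "Some x \<in> Some ` V" and None: "None \<in> ?S"
    using assms(2) by (auto simp: rw_states_def)
  have "infsum (p m (Some x)) (Some ` V) \<le> 1" and "p n (Some x) None \<le> 1"
    using substochastic_kernel.infsum_row_le_1[OF kernel_pow_substochastic]
      substochastic_kernel.le_1[OF kernel_pow_substochastic] x None subset
    by blast+
  moreover note expected_ratio_le[OF x, of n m]
  ultimately show ?thesis
    unfolding rw_p_eq_kernel_pow summable_on_reindex[OF inj_Some] infsum_reindex[OF inj_Some]
    by (simp add: o_def)
qed

end
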